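(* Let $Q$ be a real symmetric matrix acting on $(\mathbb{R}^M)^{\otimes N}$. Then the following are equivalent: 1. $\langle\psi|Q|\psi\rangle=0$ for all $\psi\in V$; 2. $\sum_{\tau\subseteq\{1,\dots,N\}}Q^{T_\tau}=0$, the sum running over all $2^N$ subsets $\tau$; 3. $Q=\sum_g c_g\bigotimes_{k=1}^N G_{g_k}$ with real coefficients $c_g$, where $c_g=0$ whenever all components of $g=(g_1,\dots,g_N)$ are non-negative.
   Context: $V$ denotes the set of normalized real product vectors $\psi=\psi_1\otimes\cdots\otimes\psi_N$ with $\psi_k\in\mathbb{R}^M$. $Q^{T_\tau}$ is the partial transpose of $Q$ (in the standard basis) on the tensor factors in $\tau$. $\{G_\gamma\}$ is a set of $M^2$ real $M\times M$ matrices ("generalized Gell-Mann matrices") forming a basis of all real $M\times M$ matrices, orthogonal w.r.t. the Hilbert–Schmidt inner product $(X,Y)\mapsto\mathrm{tr}[XY^T]$, with $G_0=\mathbb{1}$, $G_\gamma$ symmetric for $\gamma\ge0$ (there are $M(M+1)/2$ such indices) and antisymmetric for $\gamma<0$ (there are $M(M-1)/2$ such indices), normalized by $\mathrm{tr}[G_\gamma G_{\gamma'}^T]=2\delta_{\gamma\gamma'}$ for $\gamma,\gamma'\ne0$. The index $g$ ranges over $N$-tuples of such indices. *)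

theory Defs
  imports Complex_Main
begin

text \<open>The tensor factors are numbered 0..N-1 (instead of 1..N).
  A basis vector of (R^M)^{tensor N} is indexed by a multi-index: a list of
  length N with entries in {0..<M}. A (real) matrix on (R^M)^{tensor N} is a
  function from pairs of multi-indices (row, column) to reals; a real
  M x M matrix is a function nat => nat => real on {0..<M} x {0..<M}.\<close>

definition idx :: "nat \<Rightarrow> nat \<Rightarrow> nat list set" where
  "idx M N = {xs. length xs = N \<and> set xs \<subseteq> {0..<M}}"

text \<open>Index set of the generalized Gell-Mann matrices: the indices gamma >= 0
  (M(M+1)/2 of them) are 0..M(M+1)/2-1, the indices gamma < 0 (M(M-1)/2 of them)
  are -M(M-1)/2..-1.\<close>
definition Gamma :: "nat \<Rightarrow> int set" where
  "Gamma M = {- int (M * (M - 1) div 2) .. int (M * (M + 1) div 2) - 1}"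

definition gidx :: "nat \<Rightarrow> nat \<Rightarrow> int list set" where
  "gidx M N = {g. length g = N \<and> set g \<subseteq> Gamma M}"

definition hs :: "nat \<Rightarrow> (nat \<Rightarrow> nat \<Rightarrow> real) \<Rightarrow> (nat \<Rightarrow> nat \<Rightarrow> real) \<Rightarrow> real" where
  "hs M X Y = (\<Sum>a<M. \<Sum>b<M. X a b * Y a b)"

definition gell_mann :: "nat \<Rightarrow> (int \<Rightarrow> nat \<Rightarrow> nat \<Rightarrow> real) \<Rightarrow> bool" where
  "gell_mann M G \<longleftrightarrow>
     (\<forall>a<M. \<forall>b<M. G 0 a b = (if a = b then 1 else 0)) \<and>
     (\<forall>\<gamma>\<in>Gamma M. \<gamma> \<ge> 0 \<longrightarrow> (\<forall>a<M. \<forall>b<M. G \<gamma> a b = G \<gamma> b a)) \<and>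
     (\<forall>\<gamma>\<in>Gamma M. \<gamma> < 0 \<longrightarrow> (\<forall>a<M. \<forall>b<M. G \<gamma> a b = - G \<gamma> b a)) \<and>
     (\<forall>\<gamma>\<in>Gamma M. \<forall>\<gamma>'\<in>Gamma M. \<gamma> \<noteq> \<gamma>' \<longrightarrow> hs M (G \<gamma>) (G \<gamma>') = 0) \<and>
     (\<forall>\<gamma>\<in>Gamma M. \<gamma> \<noteq> 0 \<longrightarrow> hs M (G \<gamma>) (G \<gamma>) = 2) \<and>
     (\<forall>X :: nat \<Rightarrow> nat \<Rightarrow> real. \<exists>c :: int \<Rightarrow> real.
        \<forall>a<M. \<forall>b<M. X a b = (\<Sum>\<gamma>\<in>Gamma M. c \<gamma> * G \<gamma> a b))"

definition prodvec :: "nat \<Rightarrow> (nat \<Rightarrow> nat \<Rightarrow> real) \<Rightarrow> nat list \<Rightarrow> real" where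
  "prodvec N \<phi> i = (\<Prod>k<N. \<phi> k (i ! k))"

definition Vprod :: "nat \<Rightarrow> nat \<Rightarrow> (nat list \<Rightarrow> real) set" where
  "Vprod M N = {\<psi>. (\<exists>\<phi>. \<psi> = prodvec N \<phi>) \<and> (\<Sum>i\<in>idx M N. (\<psi> i)\<^sup>2) = 1}"

definition expect :: "nat \<Rightarrow> nat \<Rightarrow> (nat list \<Rightarrow> nat list \<Rightarrow> real) \<Rightarrow> (nat list \<Rightarrow> real) \<Rightarrow> real" where
  "expect M N Q \<psi> = (\<Sum>i\<in>idx M N. \<Sum>j\<in>idx M N. \<psi> i * Q i j * \<psi> j)"

definition symmetric_op :: "nat \<Rightarrow> nat \<Rightarrow> (nat list \<Rightarrow> nat list \<Rightarrow> real) \<Rightarrow> bool" where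
  "symmetric_op M N Q \<longleftrightarrow> (\<forall>i\<in>idx M N. \<forall>j\<in>idx M N. Q i j = Q j i)"

text \<open>Partial transpose on the tensor factors in tau (standard basis).\<close>
definition mix :: "nat \<Rightarrow> nat set \<Rightarrow> nat list \<Rightarrow> nat list \<Rightarrow> nat list" where
  "mix N \<tau> a b = map (\<lambda>k. if k \<in> \<tau> then a ! k else b ! k) [0..<N]"

definition ptrans :: "nat \<Rightarrow> nat set \<Rightarrow> (nat list \<Rightarrow> nat list \<Rightarrow> real) \<Rightarrow> nat list \<Rightarrow> nat list \<Rightarrow> real" where
  "ptrans N \<tau> Q i j = Q (mix N \<tau> j i) (mix N \<tau> i j)"

definition gtensor :: "nat \<Rightarrow> (int \<Rightarrow> nat \<Rightarrow> nat \<Rightarrow> real) \<Rightarrow> int list \<Rightarrow> nat list \<Rightarrow> nat list \<Rightarrow> real" where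
  "gtensor N G g i j = (\<Prod>k<N. G (g ! k) (i ! k) (j ! k))"

end

theory Submission
  imports Defs
begin

text \<open>For a product vector psi a partial transpose merely permutes the index pairs of
  <psi|Q|psi>, so S(Q) = sum_tau Q^{T_tau} has expectation 2^N <psi|Q|psi> on product vectors.
  Conversely, if all product expectations vanish, induction on N, polarising in the first
  factor, shows S(Q) = 0. Each tensor G_{g_1} (x) ... (x) G_{g_N} is an eigenvector of S with
  eigenvalue prod_k (1 + s_k), where s_k = 1 or -1 as G_{g_k} is symmetric or antisymmetric;
  this is 2^N if all g_k >= 0 and 0 otherwise. Expanding Q in this basis identifies the kernel
  of S with the span in (3).\<close>

lemma lists_length_Suc_eq:
  "{g. length g = Suc N \<and> set g \<subseteq> A} = (\<lambda>(x, g). x # g) ` (A \<times> {g. length g = N \<and> set g \<subseteq> A})"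
  by (auto simp: length_Suc_conv image_iff)

lemma sum_lists_length_Suc:
  "(\<Sum>g\<in>{g. length g = Suc N \<and> set g \<subseteq> A}. f g)
     = (\<Sum>x\<in>A. \<Sum>g\<in>{g. length g = N \<and> set g \<subseteq> A}. f (x # g))"
proof -
  have "inj_on (\<lambda>(x, g). x # g) (A \<times> {g. length g = N \<and> set g \<subseteq> A})"
    by (auto simp: inj_on_def)
  then show ?thesis
    unfolding lists_length_Suc_eq
    by (simp add: sum.reindex sum.cartesian_product split_def)
qed

lemma prod_sum_eq_sum_lists:
  fixes f :: "nat \<Rightarrow> 'a \<Rightarrow> 'b::comm_semiring_1"
  shows "(\<Prod>k<N. \<Sum>x\<in>A. f k x) = (\<Sum>g\<in>{g. length g = N \<and> set g \<subseteq> A}. \<Prod>k<N. f k (g ! k))"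
proof (induction N arbitrary: f)
  case 0
  have "{g. length g = 0 \<and> set g \<subseteq> A} = {[]}" by auto
  then show ?case by simp
next
  case (Suc N)
  have "(\<Prod>k<Suc N. \<Sum>x\<in>A. f k x) = (\<Sum>x\<in>A. f 0 x) * (\<Prod>k<N. \<Sum>x\<in>A. f (Suc k) x)"
    by (simp add: prod.lessThan_Suc_shift del: prod.lessThan_Suc)
  also have "\<dots> = (\<Sum>x\<in>A. \<Sum>g\<in>{g. length g = N \<and> set g \<subseteq> A}. f 0 x * (\<Prod>k<N. f (Suc k) (g ! k)))"
    by (simp only: Suc.IH sum_product)
  also have "\<dots> = (\<Sum>g\<in>{g. length g = Suc N \<and> set g \<subseteq> A}. \<Prod>k<Suc N. f k (g ! k))"
    by (simp add: sum_lists_length_Suc prod.lessThan_Suc_shift del: prod.lessThan_Suc)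
  finally show ?case .
qed

lemma finite_idx: "finite (idx M N)"
  using finite_lists_length_eq[of "{0..<M}" N] by (simp add: idx_def conj_commute)

lemma idx_0: "idx M 0 = {[]}"
  by (auto simp: idx_def)

lemma length_idx: "i \<in> idx M N \<Longrightarrow> length i = N"
  by (simp add: idx_def)

lemma idx_SucE:
  assumes "x \<in> idx M (Suc N)"
  obtains a i where "x = a # i" "a < M" "i \<in> idx M N"
  using assms by (cases x) (auto simp: idx_def)

lemma nth_idx_less: "i \<in> idx M N \<Longrightarrow> k < N \<Longrightarrow> i ! k < M"
  unfolding idx_def using nth_mem by fastforce

lemma nth_gidx_in_Gamma: "g \<in> gidx M N \<Longrightarrow> k < N \<Longrightarrow> g ! k \<in> Gamma M"
  unfolding gidx_def using nth_mem by fastforce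

lemma sum_idx_Suc: "(\<Sum>i\<in>idx M (Suc N). f i) = (\<Sum>a<M. \<Sum>i\<in>idx M N. f (a # i))"
  unfolding idx_def by (simp add: sum_lists_length_Suc atLeast0LessThan)

lemma nth_mix: "k < N \<Longrightarrow> mix N \<tau> a b ! k = (if k \<in> \<tau> then a ! k else b ! k)"
  by (simp add: mix_def)

lemma mix_Cons:
  "mix (Suc N) \<tau> (x # xs) (y # ys) = (if 0 \<in> \<tau> then x else y) # mix N {k. Suc k \<in> \<tau>} xs ys"
  unfolding mix_def by (simp add: upt_conv_Cons map_Suc_upt[symmetric] del: upt_Suc)

lemma mix_in_idx: "a \<in> idx M N \<Longrightarrow> b \<in> idx M N \<Longrightarrow> mix N \<tau> a b \<in> idx M N"
  unfolding idx_def by (auto simp: mix_def)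

lemma mix_mix: "i \<in> idx M N \<Longrightarrow> j \<in> idx M N \<Longrightarrow> mix N \<tau> (mix N \<tau> i j) (mix N \<tau> j i) = i"
  by (rule nth_equalityI) (auto simp: mix_def nth_mix idx_def)

definition ptrans_sum :: "nat \<Rightarrow> (nat list \<Rightarrow> nat list \<Rightarrow> real) \<Rightarrow> nat list \<Rightarrow> nat list \<Rightarrow> real" where
  "ptrans_sum N Q i j = (\<Sum>\<tau>\<in>Pow {0..<N}. ptrans N \<tau> Q i j)"

lemma ptrans_sum_cong:
  assumes "\<And>x y. x \<in> idx M N \<Longrightarrow> y \<in> idx M N \<Longrightarrow> P x y = P' x y" "i \<in> idx M N" "j \<in> idx M N"
  shows "ptrans_sum N P i j = ptrans_sum N P' i j"
  unfolding ptrans_sum_def ptrans_def using assms by (simp add: mix_in_idx)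

lemma ptrans_sum_sum:
  "ptrans_sum N (\<lambda>x y. \<Sum>a\<in>A. P a x y) i j = (\<Sum>a\<in>A. ptrans_sum N (P a) i j)"
  unfolding ptrans_sum_def ptrans_def by (rule sum.swap)

lemma ptrans_sum_cmult:
  "ptrans_sum N (\<lambda>x y. c * P x y) i j = c * ptrans_sum N P i j"
  unfolding ptrans_sum_def ptrans_def by (simp add: sum_distrib_left)

lemma sum_Pow_atLeast0_lessThan_Suc:
  "(\<Sum>\<tau>\<in>Pow {0..<Suc N}. f \<tau>) = (\<Sum>\<sigma>\<in>Pow {0..<N}. f (Suc ` \<sigma>) + f (insert 0 (Suc ` \<sigma>)))"
proof -
  let ?P = "Pow (Suc ` {0..<N})"
  have Pow_image: "?P = (`) Suc ` Pow {0..<N}"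
    by (rule image_Pow_surj[OF refl, symmetric])
  have inj_image: "inj_on ((`) Suc) (Pow {0..<N})"
    by (simp add: inj_on_def inj_image_eq_iff)
  have inj_insert: "inj_on (insert 0) ?P"
    by (rule inj_onI) (metis Pow_iff image_iff insert_ident nat.distinct(1) subset_iff)
  have "(\<Sum>\<tau>\<in>Pow {0..<Suc N}. f \<tau>) = (\<Sum>\<tau>\<in>?P. f \<tau>) + (\<Sum>\<tau>\<in>?P. f (insert 0 \<tau>))"
    unfolding atLeast0_lessThan_Suc_eq_insert_0 Pow_insert
    by (subst sum.union_disjoint) (auto simp del: image_Suc_atLeastLessThan
        simp add: sum.reindex[OF inj_insert])
  then show ?thesis
    by (simp del: image_Suc_atLeastLessThan
        add: Pow_image sum.reindex[OF inj_image] sum.distrib)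
qed

lemma ptrans_sum_Cons:
  "ptrans_sum (Suc N) Q (a # i) (b # j)
     = ptrans_sum N (\<lambda>x y. Q (a # x) (b # y)) i j + ptrans_sum N (\<lambda>x y. Q (b # x) (a # y)) i j"
proof -
  have "{k. Suc k \<in> Suc ` \<sigma>} = \<sigma>" "{k. Suc k \<in> insert 0 (Suc ` \<sigma>)} = \<sigma>" for \<sigma>
    by auto
  then show ?thesis
    by (simp add: ptrans_sum_def sum_Pow_atLeast0_lessThan_Suc ptrans_def mix_Cons sum.distrib)
qed

lemma prodvec_mix:
  assumes "length i = N" "length j = N"
  shows "prodvec N \<phi> (mix N \<tau> j i) * prodvec N \<phi> (mix N \<tau> i j) = prodvec N \<phi> i * prodvec N \<phi> j"
  unfolding prodvec_def prod.distrib[symmetric]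
  by (rule prod.cong) (auto simp: nth_mix)

lemma expect_ptrans_prodvec:
  "expect M N (ptrans N \<tau> Q) (prodvec N \<phi>) = expect M N Q (prodvec N \<phi>)"
proof -
  let ?I = "idx M N \<times> idx M N"
  let ?h = "\<lambda>(i, j). (mix N \<tau> j i, mix N \<tau> i j)"
  let ?\<psi> = "prodvec N \<phi>"
  let ?F = "\<lambda>(i, j). ?\<psi> i * Q i j * ?\<psi> j"
  have bij: "bij_betw ?h ?I ?I"
    by (rule bij_betw_byWitness[where f'="?h"]) (auto simp: mix_mix mix_in_idx)
  have "?\<psi> i * Q (mix N \<tau> j i) (mix N \<tau> i j) * ?\<psi> j = ?F (?h (i, j))"
    if "i \<in> idx M N" "j \<in> idx M N" for i j
    using prodvec_mix[OF length_idx length_idx, OF that, of \<phi> \<tau>] by (simp add: algebra_simps)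
  then have "expect M N (ptrans N \<tau> Q) ?\<psi> = (\<Sum>p\<in>?I. ?F (?h p))"
    unfolding expect_def sum.cartesian_product ptrans_def by (intro sum.cong) auto
  also have "\<dots> = (\<Sum>p\<in>?I. ?F p)"
    by (rule sum.reindex_bij_betw[OF bij])
  also have "\<dots> = expect M N Q ?\<psi>"
    unfolding expect_def sum.cartesian_product by (simp add: split_def)
  finally show ?thesis .
qed

lemma expect_sum:
  "expect M N (\<lambda>i j. \<Sum>\<tau>\<in>T. P \<tau> i j) \<psi> = (\<Sum>\<tau>\<in>T. expect M N (P \<tau>) \<psi>)"
  unfolding expect_def by (simp add: sum_distrib_left sum_distrib_right sum.swap[of _ T])

lemma expect_ptrans_sum_prodvec:
  "expect M N (ptrans_sum N Q) (prodvec N \<phi>) = 2 ^ N * expect M N Q (prodvec N \<phi>)"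
  unfolding ptrans_sum_def by (simp add: expect_sum expect_ptrans_prodvec card_Pow)

lemma prodvec_Cons: "prodvec (Suc N) (case_nat \<phi>0 \<phi>) (a # i) = \<phi>0 a * prodvec N \<phi> i"
  by (simp add: prodvec_def prod.lessThan_Suc_shift del: prod.lessThan_Suc)

lemma expect_prodvec_Suc:
  "expect M (Suc N) Q (prodvec (Suc N) (case_nat \<phi>0 \<phi>))
     = expect M N (\<lambda>i j. \<Sum>a<M. \<Sum>b<M. \<phi>0 a * \<phi>0 b * Q (a # i) (b # j)) (prodvec N \<phi>)"
proof -
  let ?I = "idx M N"
  let ?\<psi> = "prodvec N \<phi>"
  let ?H = "\<lambda>a b i j. \<phi>0 a * \<phi>0 b * (?\<psi> i * Q (a # i) (b # j) * ?\<psi> j)"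
  have "expect M (Suc N) Q (prodvec (Suc N) (case_nat \<phi>0 \<phi>)) = (\<Sum>a<M. \<Sum>i\<in>?I. \<Sum>b<M. \<Sum>j\<in>?I. ?H a b i j)"
    unfolding expect_def sum_idx_Suc prodvec_Cons by (simp add: ac_simps)
  also have "\<dots> = (\<Sum>a<M. \<Sum>i\<in>?I. \<Sum>j\<in>?I. \<Sum>b<M. ?H a b i j)"
    by (intro sum.cong refl sum.swap)
  also have "\<dots> = (\<Sum>i\<in>?I. \<Sum>a<M. \<Sum>j\<in>?I. \<Sum>b<M. ?H a b i j)"
    by (rule sum.swap)
  also have "\<dots> = (\<Sum>i\<in>?I. \<Sum>j\<in>?I. \<Sum>a<M. \<Sum>b<M. ?H a b i j)"
    by (intro sum.cong refl sum.swap)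
  also have "\<dots> = expect M N (\<lambda>i j. \<Sum>a<M. \<Sum>b<M. \<phi>0 a * \<phi>0 b * Q (a # i) (b # j)) ?\<psi>"
    unfolding expect_def by (simp add: sum_distrib_left sum_distrib_right ac_simps)
  finally show ?thesis .
qed

lemma sum_lessThan_unit_vectors:
  fixes R :: "nat \<Rightarrow> nat \<Rightarrow> real"
  assumes "p < M" "q < M"
  shows "(\<Sum>x<M. \<Sum>y<M. of_bool (x = p) * of_bool (y = q) * R x y) = R p q"
  using assms by (simp add: mult.assoc sum.delta flip: sum_distrib_left)

lemma quadratic_form_eq_0_imp_antisym:
  fixes R :: "nat \<Rightarrow> nat \<Rightarrow> real"
  assumes zero: "\<And>\<phi>. (\<Sum>x<M. \<Sum>y<M. \<phi> x * \<phi> y * R x y) = 0" and "a < M" "b < M"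
  shows "R a b + R b a = 0"
proof -
  let ?e = "\<lambda>p x. of_bool (x = p) :: real"
  have diag: "R c c = 0" if "c < M" for c
    using zero[of "?e c"] sum_lessThan_unit_vectors[OF that that, of R] by simp
  have "0 = (\<Sum>x<M. \<Sum>y<M. (?e a x + ?e b x) * (?e a y + ?e b y) * R x y)"
    using zero[of "\<lambda>x. ?e a x + ?e b x"] by simp
  also have "\<dots> = R a a + R a b + R b a + R b b"
    using assms(2,3) by (simp only: distrib_left distrib_right sum.distrib sum_lessThan_unit_vectors)
  finally show ?thesis
    using diag assms by simp
qed

text \<open>Contracting the first factor with an arbitrary \<open>\<phi>0\<close> gives an operator on \<open>N\<close> factors to
  which the induction hypothesis applies; by \<open>ptrans_sum_Cons\<close> the result is a quadratic form in
  \<open>\<phi>0\<close> that vanishes identically, and polarisation finishes the step.\<close>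
lemma ptrans_sum_eq_0_if_expect_prodvec_eq_0:
  assumes "\<forall>\<phi>. expect M N Q (prodvec N \<phi>) = 0" "i \<in> idx M N" "j \<in> idx M N"
  shows "ptrans_sum N Q i j = 0"
  using assms
proof (induction N arbitrary: Q i j)
  case 0
  then have "i = []" "j = []"
    by (auto simp: idx_0)
  moreover have "expect M 0 Q (prodvec 0 \<phi>) = Q [] []" for \<phi>
    by (simp add: expect_def idx_0 prodvec_def)
  ultimately show ?case
    using "0.prems"(1) by (simp add: ptrans_sum_def ptrans_def mix_def)
next
  case (Suc N)
  obtain a i' where i: "i = a # i'" "a < M" "i' \<in> idx M N"
    using Suc.prems(2) by (rule idx_SucE)
  obtain b j' where j: "j = b # j'" "b < M" "j' \<in> idx M N"
    using Suc.prems(3) by (rule idx_SucE)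
  define R where "R x y = ptrans_sum N (\<lambda>u v. Q (x # u) (y # v)) i' j'" for x y
  have "(\<Sum>x<M. \<Sum>y<M. \<phi>0 x * \<phi>0 y * R x y) = 0" for \<phi>0
  proof -
    let ?Q' = "\<lambda>u v. \<Sum>x<M. \<Sum>y<M. \<phi>0 x * \<phi>0 y * Q (x # u) (y # v)"
    have "\<forall>\<phi>. expect M N ?Q' (prodvec N \<phi>) = 0"
      using Suc.prems(1) expect_prodvec_Suc[of M N Q \<phi>0] by simp
    from Suc.IH[OF this i(3) j(3)] show ?thesis
      by (simp add: R_def ptrans_sum_sum ptrans_sum_cmult)
  qed
  then have "R a b + R b a = 0"
    using i(2) j(2) by (rule quadratic_form_eq_0_imp_antisym)
  then show ?case
    by (simp add: i(1) j(1) ptrans_sum_Cons R_def)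
qed

lemma prodvec_scale_first:
  "prodvec (Suc N) (\<phi>(0 := (\<lambda>x. c * \<phi> 0 x))) = (\<lambda>i. c * prodvec (Suc N) \<phi> i)"
  by (rule ext) (simp add: prodvec_def prod.lessThan_Suc_shift del: prod.lessThan_Suc)

lemma expect_scale: "expect M N Q (\<lambda>i. c * \<psi> i) = c\<^sup>2 * expect M N Q \<psi>"
  unfolding expect_def by (simp add: sum_distrib_left power2_eq_square algebra_simps)

text \<open>Rescaling the first factor normalises a product vector; for \<open>N = 0\<close> the only product
  vector is already normalised.\<close>
lemma expect_prodvec_eq_0_if_Vprod:
  assumes "\<forall>\<psi>\<in>Vprod M N. expect M N Q \<psi> = 0"
  shows "expect M N Q (prodvec N \<phi>) = 0"
proof -
  let ?\<psi> = "prodvec N \<phi>"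
  define s where "s = (\<Sum>i\<in>idx M N. (?\<psi> i)\<^sup>2)"
  consider "s = 0" | "s > 0"
    unfolding s_def by (metis sum_nonneg zero_le_power2 order_le_neq_trans)
  then show ?thesis
  proof cases
    case 1
    then have "\<forall>i\<in>idx M N. ?\<psi> i = 0"
      unfolding s_def by (simp add: sum_nonneg_eq_0_iff finite_idx)
    then show ?thesis
      by (simp add: expect_def)
  next
    case 2
    show ?thesis
    proof (cases N)
      case 0
      then have "?\<psi> \<in> Vprod M N"
        by (auto simp: Vprod_def idx_0 prodvec_def)
      then show ?thesis
        using assms by blast
    next
      case (Suc n)
      define c where "c = 1 / sqrt s"
      let ?\<phi>' = "\<phi>(0 := (\<lambda>x. c * \<phi> 0 x))"
      have scaled: "prodvec N ?\<phi>' = (\<lambda>i. c * ?\<psi> i)"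
        unfolding Suc by (rule prodvec_scale_first)
      have "(\<Sum>i\<in>idx M N. (prodvec N ?\<phi>' i)\<^sup>2) = c\<^sup>2 * s"
        unfolding scaled s_def by (simp only: power_mult_distrib sum_distrib_left)
      also have "\<dots> = 1"
        using 2 by (simp add: c_def power_divide)
      finally have "prodvec N ?\<phi>' \<in> Vprod M N"
        unfolding Vprod_def by blast
      then have "expect M N Q (prodvec N ?\<phi>') = 0"
        using assms by blast
      then have "c\<^sup>2 * expect M N Q ?\<psi> = 0"
        by (simp only: scaled expect_scale)
      then show ?thesis
        using 2 by (simp add: c_def)
    qed
  qed
qed

lemma expect_Vprod_eq_0_iff_ptrans_sum_eq_0:
  "(\<forall>\<psi>\<in>Vprod M N. expect M N Q \<psi> = 0) \<longleftrightarrow> (\<forall>i\<in>idx M N. \<forall>j\<in>idx M N. ptrans_sum N Q i j = 0)"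
proof
  assume "\<forall>\<psi>\<in>Vprod M N. expect M N Q \<psi> = 0"
  then show "\<forall>i\<in>idx M N. \<forall>j\<in>idx M N. ptrans_sum N Q i j = 0"
    using expect_prodvec_eq_0_if_Vprod ptrans_sum_eq_0_if_expect_prodvec_eq_0 by blast
next
  assume "\<forall>i\<in>idx M N. \<forall>j\<in>idx M N. ptrans_sum N Q i j = 0"
  then have "expect M N (ptrans_sum N Q) (prodvec N \<phi>) = 0" for \<phi>
    by (simp add: expect_def)
  then show "\<forall>\<psi>\<in>Vprod M N. expect M N Q \<psi> = 0"
    by (auto simp: Vprod_def expect_ptrans_sum_prodvec)
qed

definition transpose_sign :: "int \<Rightarrow> real" where
  "transpose_sign \<gamma> = (if 0 \<le> \<gamma> then 1 else -1)"

lemma gell_mann_transpose: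
  assumes "gell_mann M G" "\<gamma> \<in> Gamma M" "p < M" "q < M"
  shows "G \<gamma> q p = transpose_sign \<gamma> * G \<gamma> p q"
proof -
  have sym: "\<forall>\<gamma>\<in>Gamma M. 0 \<le> \<gamma> \<longrightarrow> (\<forall>a<M. \<forall>b<M. G \<gamma> a b = G \<gamma> b a)"
    and antisym: "\<forall>\<gamma>\<in>Gamma M. \<gamma> < 0 \<longrightarrow> (\<forall>a<M. \<forall>b<M. G \<gamma> a b = - G \<gamma> b a)"
    using assms(1) unfolding gell_mann_def by blast+
  show ?thesis
  proof (cases "0 \<le> \<gamma>")
    case True
    then have "G \<gamma> q p = G \<gamma> p q"
      using sym assms(2-4) by blast
    with True show ?thesis
      by (simp add: transpose_sign_def)
  next
    case False
    then have "G \<gamma> q p = - G \<gamma> p q"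
      using antisym assms(2-4) by (meson not_le)
    with False show ?thesis
      by (simp add: transpose_sign_def)
  qed
qed

lemma gtensor_mix:
  assumes "gell_mann M G" "g \<in> gidx M N" "i \<in> idx M N" "j \<in> idx M N" "\<tau> \<subseteq> {0..<N}"
  shows "gtensor N G g (mix N \<tau> j i) (mix N \<tau> i j) = (\<Prod>k\<in>\<tau>. transpose_sign (g ! k)) * gtensor N G g i j"
proof -
  have "gtensor N G g (mix N \<tau> j i) (mix N \<tau> i j)
      = (\<Prod>k<N. (if k \<in> \<tau> then transpose_sign (g ! k) else 1) * G (g ! k) (i ! k) (j ! k))"
    unfolding gtensor_def
  proof (rule prod.cong)
    fix k assume "k \<in> {..<N}"
    then have "G (g ! k) (j ! k) (i ! k) = transpose_sign (g ! k) * G (g ! k) (i ! k) (j ! k)"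
      using assms by (intro gell_mann_transpose) (auto simp: nth_gidx_in_Gamma nth_idx_less)
    with \<open>k \<in> {..<N}\<close> show "G (g ! k) (mix N \<tau> j i ! k) (mix N \<tau> i j ! k)
        = (if k \<in> \<tau> then transpose_sign (g ! k) else 1) * G (g ! k) (i ! k) (j ! k)"
      by (simp add: nth_mix)
  qed simp
  also have "\<dots> = (\<Prod>k<N. if k \<in> \<tau> then transpose_sign (g ! k) else 1) * gtensor N G g i j"
    unfolding gtensor_def prod.distrib ..
  also have "(\<Prod>k<N. if k \<in> \<tau> then transpose_sign (g ! k) else 1) = (\<Prod>k\<in>\<tau>. transpose_sign (g ! k))"
  proof -
    have "{..<N} \<inter> \<tau> = \<tau>"
      using assms(5) by auto
    then show ?thesis
      by (simp add: prod.If_cases)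
  qed
  finally show ?thesis .
qed

lemma sum_Pow_prod_transpose_sign:
  "(\<Sum>\<tau>\<in>Pow {0..<N}. \<Prod>k\<in>\<tau>. transpose_sign (g ! k)) = (if \<forall>k<N. 0 \<le> g ! k then 2 ^ N else 0)"
proof -
  have "(\<Sum>\<tau>\<in>Pow {0..<N}. \<Prod>k\<in>\<tau>. transpose_sign (g ! k)) = (\<Prod>k\<in>{0..<N}. transpose_sign (g ! k) + 1)"
    by (simp add: prod_add)
  also have "\<dots> = (if \<forall>k<N. 0 \<le> g ! k then 2 ^ N else 0)"
    by (auto simp: transpose_sign_def prod_zero_iff intro: prod.neutral_const)
  finally show ?thesis .
qed

lemma ptrans_sum_gtensor:
  assumes "gell_mann M G" "g \<in> gidx M N" "i \<in> idx M N" "j \<in> idx M N"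
  shows "ptrans_sum N (gtensor N G g) i j = (if \<forall>k<N. 0 \<le> g ! k then 2 ^ N else 0) * gtensor N G g i j"
proof -
  have "ptrans_sum N (gtensor N G g) i j
      = (\<Sum>\<tau>\<in>Pow {0..<N}. (\<Prod>k\<in>\<tau>. transpose_sign (g ! k)) * gtensor N G g i j)"
    unfolding ptrans_sum_def ptrans_def using assms by (intro sum.cong) (auto simp: gtensor_mix)
  also have "\<dots> = (\<Sum>\<tau>\<in>Pow {0..<N}. \<Prod>k\<in>\<tau>. transpose_sign (g ! k)) * gtensor N G g i j"
    by (rule sum_distrib_right[symmetric])
  finally show ?thesis
    by (simp only: sum_Pow_prod_transpose_sign)
qed

lemma gell_mann_unit_expansion:
  assumes "gell_mann M G"
  obtains e where
    "\<And>a b p q. p < M \<Longrightarrow> q < M \<Longrightarrow> of_bool (p = a \<and> q = b) = (\<Sum>\<gamma>\<in>Gamma M. e a b \<gamma> * G \<gamma> p q)"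
proof -
  have span: "\<forall>X :: nat \<Rightarrow> nat \<Rightarrow> real. \<exists>c. \<forall>p<M. \<forall>q<M. X p q = (\<Sum>\<gamma>\<in>Gamma M. c \<gamma> * G \<gamma> p q)"
    using assms unfolding gell_mann_def by blast
  have "\<exists>c. \<forall>p<M. \<forall>q<M. of_bool (p = a \<and> q = b) = (\<Sum>\<gamma>\<in>Gamma M. c \<gamma> * G \<gamma> p q)" for a b
    using span[rule_format, of "\<lambda>p q. of_bool (p = a \<and> q = b)"] .
  then obtain e where "\<forall>a b. \<forall>p<M. \<forall>q<M. of_bool (p = a \<and> q = b) = (\<Sum>\<gamma>\<in>Gamma M. e a b \<gamma> * G \<gamma> p q)"
    by metis
  then show ?thesis
    using that by blast
qed

lemma gtensor_unit_expansion:
  assumes unit: "\<And>a b p q. p < M \<Longrightarrow> q < M \<Longrightarrow> of_bool (p = a \<and> q = b) = (\<Sum>\<gamma>\<in>Gamma M. e a b \<gamma> * G \<gamma> p q)"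
    and "i \<in> idx M N" "j \<in> idx M N" "a \<in> idx M N" "b \<in> idx M N"
  shows "of_bool (i = a \<and> j = b) = (\<Sum>g\<in>gidx M N. (\<Prod>k<N. e (a ! k) (b ! k) (g ! k)) * gtensor N G g i j)"
proof -
  have "of_bool (i = a \<and> j = b) = (\<Prod>k<N. of_bool (i ! k = a ! k \<and> j ! k = b ! k) :: real)"
    using assms(2-5) by (auto simp: length_idx list_eq_iff_nth_eq)
  also have "\<dots> = (\<Prod>k<N. \<Sum>\<gamma>\<in>Gamma M. e (a ! k) (b ! k) \<gamma> * G \<gamma> (i ! k) (j ! k))"
    using assms(2,3) by (intro prod.cong refl unit) (auto simp: nth_idx_less)
  also have "\<dots> = (\<Sum>g\<in>gidx M N. \<Prod>k<N. e (a ! k) (b ! k) (g ! k) * G (g ! k) (i ! k) (j ! k))"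
    unfolding gidx_def by (rule prod_sum_eq_sum_lists)
  also have "\<dots> = (\<Sum>g\<in>gidx M N. (\<Prod>k<N. e (a ! k) (b ! k) (g ! k)) * gtensor N G g i j)"
    by (simp add: gtensor_def prod.distrib)
  finally show ?thesis .
qed

lemma gell_mann_gtensor_spanning:
  assumes "gell_mann M G"
  obtains d where "\<forall>i\<in>idx M N. \<forall>j\<in>idx M N. Q i j = (\<Sum>g\<in>gidx M N. d g * gtensor N G g i j)"
proof -
  obtain e where unit:
    "\<And>a b p q. p < M \<Longrightarrow> q < M \<Longrightarrow> of_bool (p = a \<and> q = b) = (\<Sum>\<gamma>\<in>Gamma M. e a b \<gamma> * G \<gamma> p q)"
    using gell_mann_unit_expansion[OF assms] by blast
  define E where "E a b g = (\<Prod>k<N. e (a ! k) (b ! k) (g ! k))" for a b g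
  define d where "d g = (\<Sum>a\<in>idx M N. \<Sum>b\<in>idx M N. Q a b * E a b g)" for g
  have "Q i j = (\<Sum>g\<in>gidx M N. d g * gtensor N G g i j)" if ij: "i \<in> idx M N" "j \<in> idx M N" for i j
  proof -
    have "Q i j = (\<Sum>a\<in>idx M N. if a = i then \<Sum>b\<in>idx M N. if b = j then Q a b else 0 else 0)"
      using ij by (simp add: finite_idx)
    also have "\<dots> = (\<Sum>a\<in>idx M N. \<Sum>b\<in>idx M N. Q a b * of_bool (i = a \<and> j = b))"
      by (auto intro!: sum.cong)
    also have "\<dots> = (\<Sum>a\<in>idx M N. \<Sum>b\<in>idx M N. \<Sum>g\<in>gidx M N. Q a b * E a b g * gtensor N G g i j)"
      using ij by (intro sum.cong refl)
        (simp add: gtensor_unit_expansion[OF unit] E_def sum_distrib_left mult.assoc)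
    also have "\<dots> = (\<Sum>g\<in>gidx M N. d g * gtensor N G g i j)"
      unfolding d_def sum_distrib_right by (simp only: sum.swap[of _ "gidx M N"])
    finally show ?thesis .
  qed
  then show ?thesis
    using that by blast
qed

lemma ptrans_sum_gtensor_expansion:
  assumes "gell_mann M G"
    and Q: "\<forall>i\<in>idx M N. \<forall>j\<in>idx M N. Q i j = (\<Sum>g\<in>gidx M N. d g * gtensor N G g i j)"
    and "i \<in> idx M N" "j \<in> idx M N"
  shows "ptrans_sum N Q i j
           = 2 ^ N * (\<Sum>g\<in>gidx M N. (if \<forall>k<N. 0 \<le> g ! k then d g else 0) * gtensor N G g i j)"
proof -
  have "ptrans_sum N Q i j = ptrans_sum N (\<lambda>x y. \<Sum>g\<in>gidx M N. d g * gtensor N G g x y) i j"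
    using Q assms(3,4) by (intro ptrans_sum_cong) auto
  also have "\<dots> = (\<Sum>g\<in>gidx M N. d g * ptrans_sum N (gtensor N G g) i j)"
    by (simp add: ptrans_sum_sum ptrans_sum_cmult)
  also have "\<dots> = 2 ^ N * (\<Sum>g\<in>gidx M N. (if \<forall>k<N. 0 \<le> g ! k then d g else 0) * gtensor N G g i j)"
    using assms(1,3,4) by (auto simp: ptrans_sum_gtensor sum_distrib_left intro!: sum.cong)
  finally show ?thesis .
qed

lemma ptrans_sum_eq_0_iff_gtensor_expansion:
  assumes "gell_mann M G"
  shows "(\<forall>i\<in>idx M N. \<forall>j\<in>idx M N. ptrans_sum N Q i j = 0) \<longleftrightarrow>
         (\<exists>c. (\<forall>g\<in>gidx M N. (\<forall>k<N. 0 \<le> g ! k) \<longrightarrow> c g = 0) \<and>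
              (\<forall>i\<in>idx M N. \<forall>j\<in>idx M N. Q i j = (\<Sum>g\<in>gidx M N. c g * gtensor N G g i j)))"
    (is "?annihilated \<longleftrightarrow> (\<exists>c. ?vanish c \<and> ?expands c)")
proof
  assume annihilated: ?annihilated
  obtain d where d: "?expands d"
    using gell_mann_gtensor_spanning[OF assms] by blast
  define c where "c g = (if \<forall>k<N. 0 \<le> g ! k then 0 else d g)" for g
  have "Q i j = (\<Sum>g\<in>gidx M N. c g * gtensor N G g i j)" if "i \<in> idx M N" "j \<in> idx M N" for i j
  proof -
    have symmetric_part: "(\<Sum>g\<in>gidx M N. (if \<forall>k<N. 0 \<le> g ! k then d g else 0) * gtensor N G g i j) = 0"
      using annihilated ptrans_sum_gtensor_expansion[OF assms d that] that by simp
    have "Q i j = (\<Sum>g\<in>gidx M N. d g * gtensor N G g i j)"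
      using d that by blast
    also have "\<dots> = (\<Sum>g\<in>gidx M N. c g * gtensor N G g i j
        + (if \<forall>k<N. 0 \<le> g ! k then d g else 0) * gtensor N G g i j)"
      by (intro sum.cong refl) (auto simp: c_def)
    also have "\<dots> = (\<Sum>g\<in>gidx M N. c g * gtensor N G g i j)
        + (\<Sum>g\<in>gidx M N. (if \<forall>k<N. 0 \<le> g ! k then d g else 0) * gtensor N G g i j)"
      by (rule sum.distrib)
    finally show ?thesis
      by (simp add: symmetric_part)
  qed
  moreover have "?vanish c"
    by (simp add: c_def)
  ultimately show "\<exists>c. ?vanish c \<and> ?expands c"
    by blast
next
  assume "\<exists>c. ?vanish c \<and> ?expands c"
  then obtain c where vanish: "?vanish c" and expands: "?expands c"
    by blast
  show ?annihilated
  proof (intro ballI)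
    fix i j assume "i \<in> idx M N" "j \<in> idx M N"
    then show "ptrans_sum N Q i j = 0"
      using vanish by (simp add: ptrans_sum_gtensor_expansion[OF assms expands] sum.neutral)
  qed
qed

theorem proposition5:
  fixes M N :: nat
    and G :: "int \<Rightarrow> nat \<Rightarrow> nat \<Rightarrow> real"
    and Q :: "nat list \<Rightarrow> nat list \<Rightarrow> real"
  assumes "gell_mann M G"
    and "symmetric_op M N Q"
  shows "((\<forall>\<psi>\<in>Vprod M N. expect M N Q \<psi> = 0)
          \<longleftrightarrow> (\<forall>i\<in>idx M N. \<forall>j\<in>idx M N. (\<Sum>\<tau>\<in>Pow {0..<N}. ptrans N \<tau> Q i j) = 0))
       \<and> ((\<forall>i\<in>idx M N. \<forall>j\<in>idx M N. (\<Sum>\<tau>\<in>Pow {0..<N}. ptrans N \<tau> Q i j) = 0)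
          \<longleftrightarrow> (\<exists>c :: int list \<Rightarrow> real.
                (\<forall>g\<in>gidx M N. (\<forall>k<N. g ! k \<ge> 0) \<longrightarrow> c g = 0) \<and>
                (\<forall>i\<in>idx M N. \<forall>j\<in>idx M N.
                   Q i j = (\<Sum>g\<in>gidx M N. c g * gtensor N G g i j))))"
  using expect_Vprod_eq_0_iff_ptrans_sum_eq_0[of M N Q]
    ptrans_sum_eq_0_iff_gtensor_expansion[OF assms(1), of N Q]
  unfolding ptrans_sum_def by blast

end
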